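(* Let $(X_n)_{n\ge0}$ be a Markov chain on $\mathbb Z_+$. Suppose there is an integer-valued random variable $\eta$ with $\mathbb E\eta>0$ such that for all $i\in\mathbb Z_+$ and $j\in\mathbb Z$, $\mathbb P\{\eta>j\}\le\mathbb P_i\{X_1-X_0>j\}$. Then there exists $\gamma>0$ such that $\sup_{i\in\mathbb Z_+}\mathbb E_ie^{\gamma\ell(i)}<\infty$.
   Context: $\mathbb P_i,\mathbb E_i$ denote probability and expectation given $X_0=i$; the local time at $i$ is $\ell(i):=\sum_{n=0}^\infty\mathbf 1\{X_n=i\}$. *)

theory Defs
  imports "HOL-Probability.Probability"
begin

text \<open>Canonical path space: a trajectory is a stream of states in Z_+ = nat;
  X_n(omega) = omega !! n.\<close>

definition markov_law :: "(nat \<Rightarrow> nat pmf) \<Rightarrow> nat \<Rightarrow> nat stream measure \<Rightarrow> bool" where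
  "markov_law p i M \<longleftrightarrow>
     prob_space M \<and> sets M = sets (stream_space (count_space UNIV)) \<and>
     (\<forall>xs. xs \<noteq> [] \<longrightarrow>
        emeasure M {\<omega> \<in> space M. stake (length xs) \<omega> = xs} =
        ennreal ((if hd xs = i then 1 else 0) *
                 (\<Prod>k<length xs - 1. pmf (p (xs ! k)) (xs ! Suc k))))"

definition local_time :: "nat \<Rightarrow> nat stream \<Rightarrow> ennreal" where
  "local_time i \<omega> = (\<Sum>n. if \<omega> !! n = i then 1 else 0)"

definition exp_ennreal :: "real \<Rightarrow> ennreal \<Rightarrow> ennreal" where
  "exp_ennreal \<gamma> x = (if x = \<top> then \<top> else ennreal (exp (\<gamma> * enn2real x)))"

end

theory Submission
  imports Defs
begin

text \<open>Truncating \<eta> at a large level \<open>L\<close> gives a step law \<open>e\<close> with \<open>\<xi> \<le> L\<close> and still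
  \<open>\<bbbE>\<xi>\<^sup>- < \<bbbE>\<xi>\<^sup>+\<close>. For the random walk with i.i.d. steps \<open>\<xi>\<close> the running maximum grows in
  expectation by at least \<open>\<bbbE>\<xi>\<^sup>+ - \<bbbE>\<xi>\<^sup>-\<close> per step, but it only grows at strict ladder epochs and
  then by at most \<open>L\<close>; by time reversal this bounds the probability that the walk stays positive
  from below by some \<open>d > 0\<close>, uniformly in time. The tail hypothesis makes the increments of the
  chain stochastically larger than \<open>\<xi>\<close>, so from any state \<open>i\<close> the chain returns to \<open>i\<close> with
  probability at most \<open>1 - d\<close>. Splitting at the first return then shows
  \<open>\<bbbE>\<^sub>i exp (\<gamma> \<ell>(i)) \<le> 2 exp \<gamma>\<close> for \<open>\<gamma> = ln (1 + d / 2)\<close>.\<close>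

lemma replicate_pmf_Suc_snoc:
  "replicate_pmf (Suc n) p = bind_pmf (replicate_pmf n p) (\<lambda>xs. map_pmf (\<lambda>x. xs @ [x]) p)"
  using replicate_pmf_distrib[of n 1 p]
  by (simp add: replicate_pmf_1 map_pmf_def bind_assoc_pmf bind_return_pmf)

lemma map_pmf_rev_replicate_pmf: "map_pmf rev (replicate_pmf n p) = replicate_pmf n p"
proof (induction n)
  case (Suc n)
  have "map_pmf rev (replicate_pmf (Suc n) p)
        = bind_pmf p (\<lambda>x. map_pmf (\<lambda>ys. ys @ [x]) (map_pmf rev (replicate_pmf n p)))"
    by (simp add: map_bind_pmf pmf.map_comp o_def map_pmf_def bind_assoc_pmf bind_return_pmf)
  also have "\<dots> = bind_pmf p (\<lambda>x. bind_pmf (replicate_pmf n p) (\<lambda>ys. return_pmf (ys @ [x])))"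
    unfolding Suc.IH by (simp only: map_pmf_def)
  also have "\<dots> = replicate_pmf (Suc n) p"
    unfolding replicate_pmf_Suc_snoc map_pmf_def by (rule bind_commute_pmf)
  finally show ?case .
qed simp

fun stays_pos :: "int \<Rightarrow> int list \<Rightarrow> bool" where
  "stays_pos d [] = True"
| "stays_pos d (x # xs) \<longleftrightarrow> d + x > 0 \<and> stays_pos (d + x) xs"

fun suffix_sums_pos :: "int list \<Rightarrow> bool" where
  "suffix_sums_pos [] = True"
| "suffix_sums_pos (x # xs) \<longleftrightarrow> x + sum_list xs > 0 \<and> suffix_sums_pos xs"

fun max_prefix_sum :: "int list \<Rightarrow> int" where
  "max_prefix_sum [] = 0"
| "max_prefix_sum (x # xs) = max 0 (x + max_prefix_sum xs)"

lemma stays_pos_snoc: "stays_pos d (xs @ [y]) \<longleftrightarrow> stays_pos d xs \<and> d + sum_list xs + y > 0"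
  by (induction xs arbitrary: d) (auto simp: add.assoc)

lemma stays_pos_rev: "stays_pos 0 (rev xs) \<longleftrightarrow> suffix_sums_pos xs"
  by (induction xs) (auto simp: stays_pos_snoc)

lemma stays_pos_mono: "stays_pos d xs \<Longrightarrow> d \<le> d' \<Longrightarrow> stays_pos d' xs"
  by (induction xs arbitrary: d d') auto

lemma max_prefix_sum_nonneg: "0 \<le> max_prefix_sum xs"
  by (cases xs) auto

lemma sum_list_le_max_prefix_sum: "sum_list xs \<le> max_prefix_sum xs"
  by (induction xs) auto

lemma max_prefix_sum_snoc: "max_prefix_sum (xs @ [y]) = max (max_prefix_sum xs) (sum_list xs + y)"
  by (induction xs) auto

lemma suffix_sums_pos_snoc: "suffix_sums_pos (xs @ [y]) \<longleftrightarrow> sum_list xs + y > max_prefix_sum xs"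
  by (induction xs) auto

lemma max_prefix_sum_le: "set xs \<subseteq> {..L} \<Longrightarrow> 0 \<le> L \<Longrightarrow> max_prefix_sum xs \<le> L * int (length xs)"
  by (induction xs) (auto simp: algebra_simps)

lemma max_prefix_sum_snoc_le:
  "y \<le> L \<Longrightarrow> max_prefix_sum (xs @ [y]) \<le> max_prefix_sum xs + (if suffix_sums_pos (xs @ [y]) then L else 0)"
  using sum_list_le_max_prefix_sum[of xs] by (auto simp: max_prefix_sum_snoc suffix_sums_pos_snoc)

definition mean_max_prefix_sum :: "int pmf \<Rightarrow> nat \<Rightarrow> ennreal" where
  "mean_max_prefix_sum e n = (\<integral>\<^sup>+xs. ennreal (of_int (max_prefix_sum xs)) \<partial>replicate_pmf n e)"

lemma mean_max_prefix_sum_finite: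
  assumes "set_pmf e \<subseteq> {..L}" and "0 \<le> L"
  shows "mean_max_prefix_sum e n < \<top>"
proof -
  have "mean_max_prefix_sum e n \<le> (\<integral>\<^sup>+xs. ennreal (of_int (L * int n)) \<partial>replicate_pmf n e)"
    unfolding mean_max_prefix_sum_def
  proof (intro nn_integral_mono_AE, unfold AE_measure_pmf_iff, intro ballI ennreal_leI)
    fix xs assume "xs \<in> set_pmf (replicate_pmf n e)"
    then have "max_prefix_sum xs \<le> L * int n"
      using assms by (auto simp: set_replicate_pmf intro!: max_prefix_sum_le)
    then show "real_of_int (max_prefix_sum xs) \<le> real_of_int (L * int n)"
      by (simp only: of_int_le_iff)
  qed
  also have "\<dots> < \<top>"
    by (simp add: measure_pmf.emeasure_space_1)
  finally show ?thesis .
qed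

lemma mean_max_prefix_sum_Suc_ge:
  fixes e :: "int pmf"
  shows "(\<integral>\<^sup>+x. ennreal (of_int x) \<partial>e) + mean_max_prefix_sum e n
     \<le> mean_max_prefix_sum e (Suc n) + (\<integral>\<^sup>+x. ennreal (of_int (- x)) \<partial>e)"
proof -
  have pointwise: "ennreal (of_int x) + ennreal (of_int z)
                     \<le> ennreal (of_int (max 0 (x + z))) + ennreal (of_int (- x))" if "0 \<le> z" for x z :: int
    unfolding ennreal_plus_if using that by (intro ennreal_leI) auto
  have "(\<integral>\<^sup>+x. ennreal (of_int x) \<partial>e) + mean_max_prefix_sum e n
        = (\<integral>\<^sup>+x. \<integral>\<^sup>+xs. ennreal (of_int x) + ennreal (of_int (max_prefix_sum xs)) \<partial>replicate_pmf n e \<partial>e)"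
    unfolding mean_max_prefix_sum_def by (simp add: nn_integral_add measure_pmf.emeasure_space_1)
  also have "\<dots> \<le> (\<integral>\<^sup>+x. \<integral>\<^sup>+xs. ennreal (of_int (max_prefix_sum (x # xs))) + ennreal (of_int (- x))
                     \<partial>replicate_pmf n e \<partial>e)"
    by (intro nn_integral_mono) (simp only: max_prefix_sum.simps pointwise max_prefix_sum_nonneg)
  also have "\<dots> = mean_max_prefix_sum e (Suc n) + (\<integral>\<^sup>+x. ennreal (of_int (- x)) \<partial>e)"
    unfolding mean_max_prefix_sum_def by (simp add: nn_integral_add measure_pmf.emeasure_space_1)
  finally show ?thesis .
qed

text \<open>The running maximum increases only at a strict ladder epoch, and by time reversal step
  \<open>n + 1\<close> is one with the probability that the walk stays positive for \<open>n + 1\<close> steps.\<close>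

lemma mean_max_prefix_sum_Suc_le:
  assumes "set_pmf e \<subseteq> {..L}" and "0 \<le> L"
  shows "mean_max_prefix_sum e (Suc n)
           \<le> mean_max_prefix_sum e n + ennreal (of_int L) * emeasure (replicate_pmf (Suc n) e) {xs. stays_pos 0 xs}"
proof -
  let ?Z = "\<lambda>xs. ennreal (of_int (max_prefix_sum xs))"
  let ?A = "{xs. suffix_sums_pos xs}"
  have "mean_max_prefix_sum e (Suc n) = (\<integral>\<^sup>+xs. \<integral>\<^sup>+x. ?Z (xs @ [x]) \<partial>e \<partial>replicate_pmf n e)"
    unfolding mean_max_prefix_sum_def replicate_pmf_Suc_snoc by (simp add: nn_integral_bind_pmf)
  also have "\<dots> \<le> (\<integral>\<^sup>+xs. \<integral>\<^sup>+x. ?Z xs + ennreal (of_int L) * indicator ((\<lambda>x. xs @ [x]) -` ?A) x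
                     \<partial>e \<partial>replicate_pmf n e)"
  proof (intro nn_integral_mono nn_integral_mono_AE, unfold AE_measure_pmf_iff, intro ballI)
    fix xs x assume "x \<in> set_pmf e"
    then have "x \<le> L"
      using assms(1) by auto
    then have "max_prefix_sum (xs @ [x]) \<le> max_prefix_sum xs + (if xs @ [x] \<in> ?A then L else 0)"
      by (simp add: max_prefix_sum_snoc_le)
    then show "?Z (xs @ [x]) \<le> ?Z xs + ennreal (of_int L) * indicator ((\<lambda>x. xs @ [x]) -` ?A) x"
      using max_prefix_sum_nonneg[of xs] assms(2)
      by (auto simp: indicator_def ennreal_plus[symmetric] simp del: ennreal_plus intro!: ennreal_leI)
  qed
  also have "\<dots> = mean_max_prefix_sum e n
                    + ennreal (of_int L) * (\<integral>\<^sup>+xs. emeasure e ((\<lambda>x. xs @ [x]) -` ?A) \<partial>replicate_pmf n e)"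
    unfolding mean_max_prefix_sum_def
    by (simp add: nn_integral_add nn_integral_cmult measure_pmf.emeasure_space_1)
  also have "(\<integral>\<^sup>+xs. emeasure e ((\<lambda>x. xs @ [x]) -` ?A) \<partial>replicate_pmf n e)
             = emeasure (replicate_pmf (Suc n) e) ?A"
    by (simp only: replicate_pmf_Suc_snoc emeasure_bind_pmf emeasure_map_pmf)
  also have "emeasure (replicate_pmf (Suc n) e) ?A = emeasure (replicate_pmf (Suc n) e) {xs. stays_pos 0 xs}"
    by (subst (2) map_pmf_rev_replicate_pmf[symmetric]) (simp add: stays_pos_rev vimage_def)
  finally show ?thesis .
qed

lemma mean_pos_le_stays_pos_prob:
  assumes "set_pmf e \<subseteq> {..L}" and "0 \<le> L"
  shows "(\<integral>\<^sup>+x. ennreal (of_int x) \<partial>e)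
           \<le> ennreal (of_int L) * emeasure (replicate_pmf (Suc n) e) {xs. stays_pos 0 xs}
             + (\<integral>\<^sup>+x. ennreal (of_int (- x)) \<partial>e)"
proof -
  have "mean_max_prefix_sum e n + (\<integral>\<^sup>+x. ennreal (of_int x) \<partial>e)
        \<le> mean_max_prefix_sum e n + (ennreal (of_int L) * emeasure (replicate_pmf (Suc n) e) {xs. stays_pos 0 xs}
             + (\<integral>\<^sup>+x. ennreal (of_int (- x)) \<partial>e))"
    using order_trans[OF mean_max_prefix_sum_Suc_ge add_right_mono[OF mean_max_prefix_sum_Suc_le[OF assms]]]
    by (simp add: add_ac)
  moreover have "mean_max_prefix_sum e n < \<top>"
    using assms by (rule mean_max_prefix_sum_finite)
  ultimately show ?thesis
    unfolding ennreal_add_left_cancel_le by auto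
qed

lemma emeasure_replicate_pmf_Suc:
  "emeasure (replicate_pmf (Suc n) p) A = (\<integral>\<^sup>+x. emeasure (replicate_pmf n p) ((#) x -` A) \<partial>p)"
proof -
  have "replicate_pmf (Suc n) p = bind_pmf p (\<lambda>x. map_pmf ((#) x) (replicate_pmf n p))"
    by (simp add: map_pmf_def)
  then show ?thesis
    by (simp only: emeasure_bind_pmf emeasure_map_pmf)
qed

definition ruin_prob :: "int pmf \<Rightarrow> nat \<Rightarrow> int \<Rightarrow> ennreal" where
  "ruin_prob e n d = emeasure (replicate_pmf n e) {xs. \<not> stays_pos d xs}"

lemma ruin_prob_Suc:
  "ruin_prob e (Suc n) d = (\<integral>\<^sup>+x. (if d + x \<le> 0 then 1 else ruin_prob e n (d + x)) \<partial>e)"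
  unfolding ruin_prob_def emeasure_replicate_pmf_Suc
  by (intro nn_integral_cong) (auto simp: measure_pmf.emeasure_space_1[simplified])

lemma ruin_prob_le_1: "ruin_prob e n d \<le> 1"
  unfolding ruin_prob_def by (rule measure_pmf.emeasure_le_1)

lemma ruin_prob_antimono: "d \<le> d' \<Longrightarrow> ruin_prob e n d' \<le> ruin_prob e n d"
  unfolding ruin_prob_def by (intro emeasure_mono) (auto intro: stays_pos_mono)

lemma ruin_prob_eq:
  "ruin_prob e n d = ennreal (1 - measure_pmf.prob (replicate_pmf n e) {xs. stays_pos d xs})"
  using measure_pmf.prob_compl[of "{xs. stays_pos d xs}" "replicate_pmf n e"]
  by (simp add: ruin_prob_def measure_pmf.emeasure_eq_measure Compl_eq_Diff_UNIV[symmetric]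
      Collect_neg_eq[symmetric])

text \<open>Peel off the lowest step: \<open>\<phi> = \<phi>' + (\<phi> a - \<phi> (a + 1)) \<cdot> indicator {..a}\<close> with \<open>\<phi>'\<close>
  constant up to \<open>a + 1\<close>, and \<open>P {..a} \<le> Q {..a}\<close>.\<close>

lemma nn_integral_antimono_le_stoch_dom:
  fixes P Q :: "int pmf" and \<phi> :: "int \<Rightarrow> ennreal"
  assumes tail: "\<And>j. measure_pmf.prob Q {z. z > j} \<le> measure_pmf.prob P {z. z > j}"
    and "antimono \<phi>" and "\<And>d. d \<le> a \<Longrightarrow> \<phi> d = \<phi> a"
    and "\<And>d. a + int k \<le> d \<Longrightarrow> \<phi> d = \<phi> (a + int k)" and "\<phi> a < \<top>"
  shows "(\<integral>\<^sup>+z. \<phi> z \<partial>P) \<le> (\<integral>\<^sup>+z. \<phi> z \<partial>Q)"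
  using assms(2-)
proof (induction k arbitrary: \<phi> a)
  case 0
  then have const: "\<phi> d = \<phi> a" for d
    by (metis add.right_neutral linorder_le_cases of_nat_0)
  have "(\<integral>\<^sup>+z. \<phi> z \<partial>R) = (\<integral>\<^sup>+z. \<phi> a \<partial>R)" for R :: "int pmf"
    by (rule nn_integral_cong) (rule const)
  then show ?case
    by (simp add: measure_pmf.emeasure_space_1)
next
  case (Suc k)
  define \<phi>' where "\<phi>' d = \<phi> (max d (a + 1))" for d
  have le: "\<phi> (a + 1) \<le> \<phi> a"
    using \<open>antimono \<phi>\<close> by (auto simp: antimono_def)
  have IH: "(\<integral>\<^sup>+z. \<phi>' z \<partial>P) \<le> (\<integral>\<^sup>+z. \<phi>' z \<partial>Q)"
  proof (rule Suc.IH)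
    show "antimono \<phi>'"
      using \<open>antimono \<phi>\<close> unfolding \<phi>'_def antimono_def by auto
    show "\<phi>' d = \<phi>' (a + 1)" if "d \<le> a + 1" for d
      using that by (simp add: \<phi>'_def max_def)
    show "\<phi>' d = \<phi>' (a + 1 + int k)" if "a + 1 + int k \<le> d" for d
    proof -
      have "\<phi> d = \<phi> (a + int (Suc k))" "\<phi> (a + 1 + int k) = \<phi> (a + int (Suc k))"
        by (rule Suc.prems(3), use that in simp)+
      then show ?thesis
        using that by (simp add: \<phi>'_def max_def)
    qed
    show "\<phi>' (a + 1) < \<top>"
      using le Suc.prems(4) by (simp add: \<phi>'_def)
  qed
  define \<Delta> where "\<Delta> = \<phi> a - \<phi> (a + 1)"
  have split: "\<phi> d = \<phi>' d + \<Delta> * indicator {..a} d" for d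
  proof (cases "d \<le> a")
    case True
    then show ?thesis
      using le Suc.prems(2)[OF True] by (simp add: \<phi>'_def \<Delta>_def max_def add_diff_self_ennreal)
  qed (simp add: \<phi>'_def)
  have integral_split: "(\<integral>\<^sup>+z. \<phi> z \<partial>R) = (\<integral>\<^sup>+z. \<phi>' z \<partial>R) + \<Delta> * emeasure R {..a}" for R :: "int pmf"
    unfolding split by (simp add: nn_integral_add nn_integral_cmult)
  have "{..a} = UNIV - {z. z > a}"
    by auto
  then have "measure_pmf.prob P {..a} \<le> measure_pmf.prob Q {..a}"
    using tail[of a] measure_pmf.prob_compl[of "{z. z > a}" P] measure_pmf.prob_compl[of "{z. z > a}" Q]
    by simp
  then have "emeasure P {..a} \<le> emeasure Q {..a}"
    by (simp add: measure_pmf.emeasure_eq_measure)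
  then show ?case
    unfolding integral_split using IH by (intro add_mono mult_left_mono) auto
qed

text \<open>\<open>hit_prob p i n x\<close> is \<open>\<bbbP>\<^sub>x {X\<^sub>k = i for some 1 \<le> k \<le> n}\<close>.\<close>

primrec hit_prob :: "(nat \<Rightarrow> nat pmf) \<Rightarrow> nat \<Rightarrow> nat \<Rightarrow> nat \<Rightarrow> ennreal" where
  "hit_prob p i 0 x = 0"
| "hit_prob p i (Suc n) x = (\<integral>\<^sup>+y. (if y = i then 1 else hit_prob p i n y) \<partial>p x)"

lemma hit_prob_le_1: "hit_prob p i n x \<le> 1"
proof (induction n arbitrary: x)
  case (Suc n)
  have "hit_prob p i (Suc n) x \<le> (\<integral>\<^sup>+y. 1 \<partial>p x)"
    unfolding hit_prob.simps by (intro nn_integral_mono) (use Suc in auto)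
  then show ?case
    by (simp add: measure_pmf.emeasure_space_1)
qed simp

text \<open>A step to any state \<open>\<le> i\<close> is bounded by \<open>1\<close>, as is ruin of the walk; above \<open>i\<close> the step
  law of the chain dominates \<open>e\<close>. Capping the step at \<open>L\<close> makes the test function constant
  outside a finite interval, as stochastic domination requires.\<close>

lemma hit_prob_le_ruin_prob:
  assumes bounded: "set_pmf e \<subseteq> {..L}"
    and tail: "\<And>x j. measure_pmf.prob e {z. z > j} \<le> measure_pmf.prob (p x) {y. int y - int x > j}"
  shows "hit_prob p i n x \<le> ruin_prob e n (int x - int i)"
proof (induction n arbitrary: x)
  case (Suc n)
  define \<phi> where "\<phi> d = (if d \<le> 0 then 1 else ruin_prob e n d)" for d
  define c where "c = int x - int i"
  have "antimono \<phi>"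
    by (rule antimonoI) (use ruin_prob_le_1 ruin_prob_antimono in \<open>auto simp: \<phi>_def\<close>)
  have "hit_prob p i (Suc n) x \<le> (\<integral>\<^sup>+y. \<phi> (int y - int i) \<partial>p x)"
    unfolding hit_prob.simps
    by (intro nn_integral_mono) (use hit_prob_le_1 Suc.IH in \<open>auto simp: \<phi>_def\<close>)
  also have "\<dots> = (\<integral>\<^sup>+z. \<phi> (z + c) \<partial>map_pmf (\<lambda>y. int y - int x) (p x))"
    by (simp add: c_def)
  also have "\<dots> \<le> (\<integral>\<^sup>+z. \<phi> (min (z + c) (L + c)) \<partial>map_pmf (\<lambda>y. int y - int x) (p x))"
    using \<open>antimono \<phi>\<close> by (intro nn_integral_mono) (auto simp: antimono_def)
  also have "\<dots> \<le> (\<integral>\<^sup>+z. \<phi> (min (z + c) (L + c)) \<partial>e)"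
  proof (rule nn_integral_antimono_le_stoch_dom[where a = "min (- c) L" and k = "nat (L - min (- c) L)"])
    show "measure_pmf.prob e {z. z > j} \<le> measure_pmf.prob (map_pmf (\<lambda>y. int y - int x) (p x)) {z. z > j}" for j
      using tail[of j x] by (simp add: vimage_def)
    show "antimono (\<lambda>z. \<phi> (min (z + c) (L + c)))"
      using \<open>antimono \<phi>\<close> by (auto simp: antimono_def)
    show "\<phi> (min (min (- c) L + c) (L + c)) < \<top>"
      using ruin_prob_le_1[of e n] by (auto simp: \<phi>_def top_unique)
    show "\<phi> (min (d + c) (L + c)) = \<phi> (min (min (- c) L + c) (L + c))" if "d \<le> min (- c) L" for d
      using that by (auto simp: \<phi>_def)
    show "\<phi> (min (d + c) (L + c)) = \<phi> (min (min (- c) L + int (nat (L - min (- c) L)) + c) (L + c))"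
      if "min (- c) L + int (nat (L - min (- c) L)) \<le> d" for d
      using that by simp
  qed
  also have "\<dots> = (\<integral>\<^sup>+z. (if c + z \<le> 0 then 1 else ruin_prob e n (c + z)) \<partial>e)"
  proof (intro nn_integral_cong_AE, unfold AE_measure_pmf_iff, intro ballI)
    fix z assume "z \<in> set_pmf e"
    then have "min (z + c) (L + c) = c + z"
      using bounded by auto
    then show "\<phi> (min (z + c) (L + c)) = (if c + z \<le> 0 then 1 else ruin_prob e n (c + z))"
      by (simp add: \<phi>_def)
  qed
  also have "\<dots> = ruin_prob e (Suc n) (int x - int i)"
    by (simp only: ruin_prob_Suc c_def)
  finally show ?case .
qed simp

lemma hit_prob_self_le:
  assumes bounded: "set_pmf e \<subseteq> {..L}"
    and tail: "\<And>x j. measure_pmf.prob e {z. z > j} \<le> measure_pmf.prob (p x) {y. int y - int x > j}"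
    and stays_pos: "\<And>n. d \<le> measure_pmf.prob (replicate_pmf (Suc n) e) {xs. stays_pos 0 xs}"
  shows "hit_prob p i n i \<le> ennreal (1 - d)"
proof (cases n)
  case (Suc m)
  have "hit_prob p i n i \<le> ruin_prob e n (int i - int i)"
    by (rule hit_prob_le_ruin_prob) (use bounded tail in auto)
  also have "\<dots> \<le> ennreal (1 - d)"
    using stays_pos[of m] by (auto simp: ruin_prob_eq Suc intro!: ennreal_leI)
  finally show ?thesis .
qed simp

text \<open>\<open>visit_mgf p i g n x\<close> is \<open>\<bbbE>\<^sub>x exp (g \<cdot> #{1 \<le> k \<le> n. X\<^sub>k = i})\<close>.\<close>

primrec visit_mgf :: "(nat \<Rightarrow> nat pmf) \<Rightarrow> nat \<Rightarrow> real \<Rightarrow> nat \<Rightarrow> nat \<Rightarrow> ennreal" where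
  "visit_mgf p i g 0 x = 1"
| "visit_mgf p i g (Suc n) x =
     (\<integral>\<^sup>+y. (if y = i then ennreal (exp g) * visit_mgf p i g n i else visit_mgf p i g n y) \<partial>p x)"

lemma visit_mgf_ge_1: "0 \<le> g \<Longrightarrow> 1 \<le> visit_mgf p i g n x"
proof (induction n arbitrary: x)
  case (Suc n)
  have "1 \<le> ennreal (exp g) * visit_mgf p i g n i"
    using Suc.IH[of i] Suc.prems by (metis mult_mono' mult_1 zero_le_one one_le_exp_iff ennreal_1 ennreal_leI)
  then have "(\<integral>\<^sup>+y. 1 \<partial>p x) \<le> visit_mgf p i g (Suc n) x"
    unfolding visit_mgf.simps by (intro nn_integral_mono) (use Suc in auto)
  then show ?case
    by (simp add: measure_pmf.emeasure_space_1)
qed simp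

lemma visit_mgf_Suc_ge: "0 \<le> g \<Longrightarrow> visit_mgf p i g n x \<le> visit_mgf p i g (Suc n) x"
proof (induction n arbitrary: x)
  case 0
  then show ?case
    using visit_mgf_ge_1[of g p i "Suc 0" x] by simp
next
  case (Suc n)
  show ?case
    unfolding visit_mgf.simps(2)[of p i g "Suc n" x] visit_mgf.simps(2)[of p i g n x]
    by (intro nn_integral_mono) (use Suc in \<open>auto intro: mult_left_mono\<close>)
qed

lemma visit_mgf_le_exp: "visit_mgf p i g n x \<le> ennreal (exp (\<bar>g\<bar> * real n))"
proof (induction n arbitrary: x)
  case (Suc n)
  have step: "ennreal (exp g) * ennreal (exp (\<bar>g\<bar> * real n)) \<le> ennreal (exp (\<bar>g\<bar> * real (Suc n)))"
    by (simp add: ennreal_mult[symmetric] exp_add[symmetric] algebra_simps del: ennreal_mult')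
  have mono: "ennreal (exp (\<bar>g\<bar> * real n)) \<le> ennreal (exp (\<bar>g\<bar> * real (Suc n)))"
    by (intro ennreal_leI) (simp add: mult_left_mono)
  have "visit_mgf p i g (Suc n) x \<le> (\<integral>\<^sup>+y. ennreal (exp (\<bar>g\<bar> * real (Suc n))) \<partial>p x)"
    unfolding visit_mgf.simps
  proof (intro nn_integral_mono)
    fix y
    have "ennreal (exp g) * visit_mgf p i g n i \<le> ennreal (exp g) * ennreal (exp (\<bar>g\<bar> * real n))"
      using Suc[of i] by (intro mult_left_mono) auto
    then show "(if y = i then ennreal (exp g) * visit_mgf p i g n i else visit_mgf p i g n y)
               \<le> ennreal (exp (\<bar>g\<bar> * real (Suc n)))"
      using step mono Suc[of y] by (auto intro: order_trans)
  qed
  then show ?case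
    by (simp add: measure_pmf.emeasure_space_1)
qed simp

text \<open>Split at the first return to \<open>i\<close>: without a return the weight is \<open>1\<close>, and after it the
  remaining visits contribute at most \<open>exp g \<cdot> visit_mgf p i g n i\<close>.\<close>

lemma visit_mgf_add_hit_prob_le:
  assumes "0 \<le> g"
  shows "visit_mgf p i g n x + hit_prob p i n x \<le> 1 + hit_prob p i n x * (ennreal (exp g) * visit_mgf p i g n i)"
proof (induction n arbitrary: x)
  case (Suc n)
  define K where "K = ennreal (exp g) * visit_mgf p i g (Suc n) i"
  have K: "ennreal (exp g) * visit_mgf p i g n i \<le> K"
    unfolding K_def using visit_mgf_Suc_ge[OF assms] by (intro mult_left_mono) auto
  have "visit_mgf p i g (Suc n) x + hit_prob p i (Suc n) x
        = (\<integral>\<^sup>+y. (if y = i then ennreal (exp g) * visit_mgf p i g n i else visit_mgf p i g n y)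
                 + (if y = i then 1 else hit_prob p i n y) \<partial>p x)"
    by (simp add: nn_integral_add)
  also have "\<dots> \<le> (\<integral>\<^sup>+y. 1 + (if y = i then 1 else hit_prob p i n y) * K \<partial>p x)"
  proof (intro nn_integral_mono)
    fix y
    have "visit_mgf p i g n y + hit_prob p i n y \<le> 1 + hit_prob p i n y * (ennreal (exp g) * visit_mgf p i g n i)"
      by (rule Suc.IH)
    also have "\<dots> \<le> 1 + hit_prob p i n y * K"
      using K by (intro add_left_mono mult_left_mono) auto
    finally show "(if y = i then ennreal (exp g) * visit_mgf p i g n i else visit_mgf p i g n y)
                  + (if y = i then 1 else hit_prob p i n y) \<le> 1 + (if y = i then 1 else hit_prob p i n y) * K"
      using K by (auto simp: add.commute add_left_mono)
  qed
  also have "\<dots> = 1 + hit_prob p i (Suc n) x * K"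
    by (simp add: nn_integral_add nn_integral_multc measure_pmf.emeasure_space_1)
  finally show ?case
    unfolding K_def .
qed simp

lemma le_2_of_renewal_ineq:
  fixes F h d :: real
  assumes "F + h \<le> 1 + h * ((1 + d / 2) * F)" and "0 \<le> h" and "h \<le> 1 - d" and "1 \<le> F" and "0 < d"
  shows "F \<le> 2"
proof -
  have "1 * 1 \<le> (1 + d / 2) * F"
    using assms(4,5) by (intro mult_mono) auto
  then have "h * ((1 + d / 2) * F - 1) \<le> (1 - d) * ((1 + d / 2) * F - 1)"
    using assms(3) by (intro mult_right_mono) auto
  then have "F - 1 \<le> (1 - d) * ((1 + d / 2) * F - 1)"
    using assms(1) by (simp add: algebra_simps)
  also have "\<dots> = F - 1 + d - d * (F * (1 + d)) / 2"
    by (simp add: field_simps)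
  finally have "F * (1 + d) \<le> 2"
    using assms(5) by simp
  moreover have "F \<le> F * (1 + d)"
    using assms(4,5) by simp
  ultimately show ?thesis
    by linarith
qed

lemma visit_mgf_le_2:
  assumes "0 < d" and "d \<le> 1" and return: "\<And>n. hit_prob p i n i \<le> ennreal (1 - d)"
  shows "visit_mgf p i (ln (1 + d / 2)) n i \<le> 2"
proof -
  define g where "g = ln (1 + d / 2)"
  have "0 \<le> g" and exp_g: "exp g = 1 + d / 2"
    using assms(1) by (simp_all add: g_def)
  obtain F where F: "visit_mgf p i g n i = ennreal F" "0 \<le> F"
    using visit_mgf_le_exp[of p i g n i] by (cases "visit_mgf p i g n i") (auto simp: top_unique)
  obtain h where h: "hit_prob p i n i = ennreal h" "0 \<le> h"
    using hit_prob_le_1[of p i n i] by (cases "hit_prob p i n i") (auto simp: top_unique)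
  have "1 \<le> F"
    using visit_mgf_ge_1[OF \<open>0 \<le> g\<close>, of p i n i] F by simp
  have "h \<le> 1 - d"
    using return[of n] h assms(1,2) by (auto simp: ennreal_le_iff2 split: if_splits)
  have "ennreal (F + h) = visit_mgf p i g n i + hit_prob p i n i"
    using F h by simp
  also have "\<dots> \<le> 1 + hit_prob p i n i * (ennreal (exp g) * visit_mgf p i g n i)"
    using \<open>0 \<le> g\<close> by (rule visit_mgf_add_hit_prob_le)
  also have "\<dots> = ennreal (1 + h * ((1 + d / 2) * F))"
    using F h assms(1) by (simp add: exp_g ennreal_mult)
  finally have "ennreal (F + h) \<le> ennreal (1 + h * ((1 + d / 2) * F))" .
  moreover have "0 \<le> 1 + h * ((1 + d / 2) * F)"
    using h(2) F(2) assms(1) by simp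
  ultimately have "F + h \<le> 1 + h * ((1 + d / 2) * F)"
    by (simp only: ennreal_le_iff)
  then have "F \<le> 2"
    using le_2_of_renewal_ineq \<open>0 \<le> h\<close> \<open>h \<le> 1 - d\<close> \<open>1 \<le> F\<close> assms(1) by blast
  then show ?thesis
    using F ennreal_leI[OF \<open>F \<le> 2\<close>] by (simp add: g_def)
qed

primrec path_pmf :: "(nat \<Rightarrow> nat pmf) \<Rightarrow> nat \<Rightarrow> nat \<Rightarrow> nat list pmf" where
  "path_pmf p x 0 = return_pmf [x]"
| "path_pmf p x (Suc n) = map_pmf ((#) x) (bind_pmf (p x) (\<lambda>y. path_pmf p y n))"

lemma set_path_pmf: "xs \<in> set_pmf (path_pmf p x n) \<Longrightarrow> \<exists>ys. xs = x # ys \<and> length ys = n"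
  by (induction n arbitrary: x xs) fastforce+

lemma pmf_path_pmf:
  "pmf (path_pmf p x n) xs =
     (if length xs = Suc n \<and> hd xs = x then \<Prod>k<n. pmf (p (xs ! k)) (xs ! Suc k) else 0)"
proof (induction n arbitrary: x xs)
  case 0
  then show ?case
    by (cases xs) (auto simp: indicator_def)
next
  case (Suc n)
  show ?case
  proof (cases "\<exists>ys. xs = x # ys")
    case False
    then have "xs \<notin> set_pmf (path_pmf p x (Suc n))"
      using set_path_pmf by blast
    then have "pmf (path_pmf p x (Suc n)) xs = 0"
      by (rule iffD2[OF pmf_eq_0_set_pmf])
    then show ?thesis
      using False by (cases xs) auto
  next
    case True
    then obtain ys where xs: "xs = x # ys" ..
    let ?w = "\<lambda>ys. \<Prod>k<n. pmf (p (ys ! k)) (ys ! Suc k)"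
    have "ennreal (pmf (path_pmf p x (Suc n)) xs) = ennreal (pmf (bind_pmf (p x) (\<lambda>y. path_pmf p y n)) ys)"
      unfolding xs path_pmf.simps by (subst pmf_map_inj') (simp_all add: inj_def)
    also have "\<dots> = (\<integral>\<^sup>+y. ennreal (pmf (path_pmf p y n) ys) \<partial>p x)"
      by (rule ennreal_pmf_bind)
    also have "\<dots> = (\<integral>\<^sup>+y. ennreal (if length ys = Suc n then ?w ys else 0) * indicator {hd ys} y \<partial>p x)"
      unfolding Suc.IH by (intro nn_integral_cong) (simp add: indicator_def)
    also have "\<dots> = ennreal ((if length ys = Suc n then ?w ys else 0) * pmf (p x) (hd ys))"
      by (simp add: emeasure_pmf_single ennreal_mult' prod_nonneg)
    also have "\<dots> = ennreal (if length ys = Suc n then \<Prod>k<Suc n. pmf (p (xs ! k)) (xs ! Suc k) else 0)"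
      by (cases ys) (simp_all add: xs prod.lessThan_Suc_shift mult.commute del: prod.lessThan_Suc)
    finally show ?thesis
      by (simp add: xs prod_nonneg)
  qed
qed

lemma nn_integral_path_pmf_visits:
  "(\<integral>\<^sup>+xs. ennreal (exp (g * real (count_list (tl xs) i))) \<partial>path_pmf p x n) = visit_mgf p i g n x"
proof (induction n arbitrary: x)
  case (Suc n)
  have "(\<integral>\<^sup>+ys. ennreal (exp (g * real (count_list ys i))) \<partial>path_pmf p y n)
        = (if y = i then ennreal (exp g) * visit_mgf p i g n i else visit_mgf p i g n y)" for y
  proof -
    have "(\<integral>\<^sup>+ys. ennreal (exp (g * real (count_list ys i))) \<partial>path_pmf p y n)
          = (\<integral>\<^sup>+ys. ennreal (if y = i then exp g else 1) * ennreal (exp (g * real (count_list (tl ys) i))) \<partial>path_pmf p y n)"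
      by (intro nn_integral_cong_AE)
         (auto simp: AE_measure_pmf_iff ennreal_mult[symmetric] exp_add[symmetric] algebra_simps
               dest!: set_path_pmf)
    then show ?thesis
      by (simp add: nn_integral_cmult Suc.IH)
  qed
  then show ?case
    by simp
qed (simp)

lemma markov_law_distr_stake:
  assumes "markov_law p i M"
  shows "distr M (count_space UNIV) (stake (Suc n)) = measure_pmf (path_pmf p i n)"
proof -
  have sets: "sets M = sets (stream_space (count_space UNIV))"
    and cylinder: "\<And>xs. xs \<noteq> [] \<Longrightarrow> emeasure M {\<omega> \<in> space M. stake (length xs) \<omega> = xs} =
        ennreal ((if hd xs = i then 1 else 0) * (\<Prod>k<length xs - 1. pmf (p (xs ! k)) (xs ! Suc k)))"
    using assms unfolding markov_law_def by auto
  have meas: "stake (Suc n) \<in> M \<rightarrow>\<^sub>M count_space UNIV"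
    using measurable_stake[of "Suc n"] by (simp add: measurable_cong_sets[OF sets refl])
  show ?thesis
  proof (rule measure_eqI_countable[where A = UNIV])
    fix xs :: "nat list"
    have "emeasure (distr M (count_space UNIV) (stake (Suc n))) {xs} = emeasure M {\<omega> \<in> space M. stake (Suc n) \<omega> = xs}"
      by (subst emeasure_distr[OF meas]) (auto intro!: arg_cong[where f = "emeasure M"])
    also have "\<dots> = emeasure (path_pmf p i n) {xs}"
    proof (cases "length xs = Suc n")
      case True
      then have "xs \<noteq> []"
        by auto
      then show ?thesis
        using cylinder[of xs] True by (simp add: emeasure_pmf_single pmf_path_pmf)
    next
      case False
      then have "{\<omega> \<in> space M. stake (Suc n) \<omega> = xs} = {}"
        by (auto dest: arg_cong[where f = length])
      then show ?thesis
        using False by (simp only: emeasure_pmf_single pmf_path_pmf emeasure_empty) simp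
    qed
    finally show "emeasure (distr M (count_space UNIV) (stake (Suc n))) {xs} = emeasure (path_pmf p i n) {xs}" .
  qed auto
qed

lemma local_time_eq_SUP: "local_time i \<omega> = (SUP m. of_nat (count_list (stake m \<omega>) i))"
proof -
  have "(\<Sum>k<m. if \<omega> !! k = i then 1 else 0 :: ennreal) = of_nat (count_list (stake m \<omega>) i)" for m
    by (induction m) (simp, simp add: stake_Suc del: stake.simps)
  then show ?thesis
    unfolding local_time_def suminf_eq_SUP by simp
qed

lemma exp_ennreal_SUP_of_nat_le:
  fixes a :: "nat \<Rightarrow> nat"
  assumes "0 < g"
  shows "exp_ennreal g (SUP m. of_nat (a m)) \<le> (SUP m. ennreal (exp (g * real (a m))))"
proof (cases "bdd_above (range a)")
  case True
  then have "finite (range a)"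
    by (rule bdd_above_nat[THEN iffD1])
  obtain m0 where "a m0 = Max (range a)"
    using Max_in[OF \<open>finite (range a)\<close>] by auto
  then have m0: "a m \<le> a m0" for m
    using \<open>finite (range a)\<close> by simp
  then have "(SUP m. of_nat (a m) :: ennreal) = of_nat (a m0)"
    by (intro antisym SUP_least SUP_upper2[of m0]) auto
  then have "exp_ennreal g (SUP m. of_nat (a m)) = ennreal (exp (g * real (a m0)))"
    by (simp add: exp_ennreal_def)
  also have "\<dots> \<le> (SUP m. ennreal (exp (g * real (a m))))"
    by (rule SUP_upper) simp
  finally show ?thesis .
next
  case False
  have "(SUP m. ennreal (exp (g * real (a m)))) = \<top>"
  proof (rule ennreal_SUP_eq_top)
    fix N :: nat
    obtain m where "nat \<lceil>real N / g\<rceil> < a m"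
      using False unfolding bdd_above_def by (auto simp: not_le)
    then have "real N / g \<le> real (a m)"
      by linarith
    then have "real N \<le> g * real (a m)"
      using assms by (simp add: field_simps)
    also have "\<dots> \<le> exp (g * real (a m))"
      using exp_ge_add_one_self[of "g * real (a m)"] by linarith
    finally show "\<exists>m\<in>UNIV. of_nat N \<le> ennreal (exp (g * real (a m)))"
      by (auto simp: ennreal_of_nat_eq_real_of_nat intro!: ennreal_leI)
  qed
  then show ?thesis
    by (metis top_greatest)
qed

lemma nn_integral_exp_local_time_le:
  assumes M: "markov_law p i M" and "0 < g" and bound: "\<And>n. visit_mgf p i g n i \<le> C"
  shows "(\<integral>\<^sup>+\<omega>. exp_ennreal g (local_time i \<omega>) \<partial>M) \<le> ennreal (exp g) * C"
proof -
  have sets: "sets M = sets (stream_space (count_space UNIV))"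
    using M unfolding markov_law_def by auto
  have meas: "stake n \<in> M \<rightarrow>\<^sub>M count_space UNIV" for n
    using measurable_stake[of n] by (simp add: measurable_cong_sets[OF sets refl])
  define f where "f n \<omega> = ennreal (exp (g * real (count_list (stake n \<omega>) i)))" for n \<omega>
  have f_Suc: "f n \<omega> \<le> f (Suc n) \<omega>" for n \<omega>
    using \<open>0 < g\<close> by (auto simp: f_def stake_Suc intro!: ennreal_leI simp del: stake.simps)
  have integral_f: "(\<integral>\<^sup>+\<omega>. f (Suc n) \<omega> \<partial>M) = ennreal (exp g) * visit_mgf p i g n i" for n
  proof -
    have "(\<integral>\<^sup>+\<omega>. f (Suc n) \<omega> \<partial>M) = (\<integral>\<^sup>+xs. ennreal (exp (g * real (count_list xs i))) \<partial>path_pmf p i n)"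
      unfolding f_def markov_law_distr_stake[OF M, symmetric]
      by (subst nn_integral_distr[OF meas]) simp_all
    also have "\<dots> = (\<integral>\<^sup>+xs. ennreal (exp g) * ennreal (exp (g * real (count_list (tl xs) i))) \<partial>path_pmf p i n)"
      by (intro nn_integral_cong_AE)
         (auto simp: AE_measure_pmf_iff ennreal_mult[symmetric] exp_add[symmetric] algebra_simps
               dest!: set_path_pmf)
    finally show ?thesis
      by (simp add: nn_integral_cmult nn_integral_path_pmf_visits)
  qed
  have "incseq f"
    by (intro incseq_SucI le_funI f_Suc)
  have f_meas: "f n \<in> borel_measurable M" for n
    unfolding f_def by (rule measurable_compose[OF meas]) simp
  have "(\<integral>\<^sup>+\<omega>. exp_ennreal g (local_time i \<omega>) \<partial>M) \<le> (\<integral>\<^sup>+\<omega>. (SUP n. f n \<omega>) \<partial>M)"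
    unfolding local_time_eq_SUP f_def by (intro nn_integral_mono exp_ennreal_SUP_of_nat_le \<open>0 < g\<close>)
  also have "\<dots> = (SUP n. \<integral>\<^sup>+\<omega>. f n \<omega> \<partial>M)"
    using nn_integral_monotone_convergence_SUP[OF \<open>incseq f\<close> f_meas] by (simp add: SUP_apply)
  also have "\<dots> \<le> ennreal (exp g) * C"
  proof (rule SUP_least)
    fix n
    have "(\<integral>\<^sup>+\<omega>. f n \<omega> \<partial>M) \<le> (\<integral>\<^sup>+\<omega>. f (Suc n) \<omega> \<partial>M)"
      by (intro nn_integral_mono f_Suc)
    also have "\<dots> \<le> ennreal (exp g) * C"
      unfolding integral_f using bound by (intro mult_left_mono) auto
    finally show "(\<integral>\<^sup>+\<omega>. f n \<omega> \<partial>M) \<le> ennreal (exp g) * C" .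
  qed
  finally show ?thesis .
qed

lemma measure_pmf_Abs_pmf:
  fixes M :: "'a::countable measure"
  assumes "prob_space M" and "sets M = UNIV"
  shows "measure_pmf (Abs_pmf M) = M"
proof (rule Abs_pmf_inverse, intro CollectI conjI)
  interpret prob_space M by fact
  show "AE x in M. measure M {x} \<noteq> 0"
    using AE_support_countable[OF assms(2)] by blast
qed fact+

lemma SUP_ennreal_of_int_min: "(SUP K::nat. ennreal (of_int (min z (int K)))) = ennreal (of_int z)"
proof (rule antisym)
  show "(SUP K::nat. ennreal (of_int (min z (int K)))) \<le> ennreal (of_int z)"
    by (intro SUP_least ennreal_leI) simp
  have "ennreal (of_int z) = ennreal (of_int (min z (int (nat z))))"
    by (cases "z \<ge> 0") (auto simp: ennreal_neg)
  also have "\<dots> \<le> (SUP K::nat. ennreal (of_int (min z (int K))))"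
    by (rule SUP_upper) simp
  finally show "ennreal (of_int z) \<le> (SUP K::nat. ennreal (of_int (min z (int K))))" .
qed

lemma truncated_step_pmf:
  fixes N :: "'a measure" and \<eta> :: "'a \<Rightarrow> int"
  assumes "prob_space N" and \<eta>: "\<eta> \<in> N \<rightarrow>\<^sub>M count_space UNIV"
    and drift: "(\<integral>\<^sup>+\<omega>. ennreal (of_int (- \<eta> \<omega>)) \<partial>N) < (\<integral>\<^sup>+\<omega>. ennreal (of_int (\<eta> \<omega>)) \<partial>N)"
  obtains e :: "int pmf" and L :: int
  where "0 < L" and "set_pmf e \<subseteq> {..L}"
    and "(\<integral>\<^sup>+x. ennreal (of_int (- x)) \<partial>e) < (\<integral>\<^sup>+x. ennreal (of_int x) \<partial>e)"
    and "\<And>j. measure_pmf.prob e {x. x > j} \<le> measure N {\<omega> \<in> space N. \<eta> \<omega> > j}"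
proof -
  define e\<^sub>0 where "e\<^sub>0 = Abs_pmf (distr N (count_space UNIV) \<eta>)"
  have e\<^sub>0: "measure_pmf e\<^sub>0 = distr N (count_space UNIV) \<eta>"
    unfolding e\<^sub>0_def using prob_space.prob_space_distr[OF assms(1) \<eta>]
    by (intro measure_pmf_Abs_pmf) simp_all
  have nn_integral_e\<^sub>0: "(\<integral>\<^sup>+z. f z \<partial>e\<^sub>0) = (\<integral>\<^sup>+\<omega>. f (\<eta> \<omega>) \<partial>N)" for f :: "int \<Rightarrow> ennreal"
    unfolding e\<^sub>0 by (rule nn_integral_distr[OF \<eta>]) simp
  have "(\<integral>\<^sup>+\<omega>. ennreal (of_int (\<eta> \<omega>)) \<partial>N)
        = (\<integral>\<^sup>+\<omega>. (SUP K::nat. ennreal (of_int (min (\<eta> \<omega>) (int K)))) \<partial>N)"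
    by (simp only: SUP_ennreal_of_int_min)
  also have "\<dots> = (SUP K::nat. \<integral>\<^sup>+\<omega>. ennreal (of_int (min (\<eta> \<omega>) (int K))) \<partial>N)"
  proof (rule nn_integral_monotone_convergence_SUP)
    show "incseq (\<lambda>K \<omega>. ennreal (of_int (min (\<eta> \<omega>) (int K))))"
      by (auto simp: incseq_def le_fun_def intro!: ennreal_leI)
    show "(\<lambda>\<omega>. ennreal (of_int (min (\<eta> \<omega>) (int K)))) \<in> borel_measurable N" for K
      by (rule measurable_compose[OF \<eta>]) simp
  qed
  finally obtain K :: nat
    where K: "(\<integral>\<^sup>+\<omega>. ennreal (of_int (- \<eta> \<omega>)) \<partial>N) < (\<integral>\<^sup>+\<omega>. ennreal (of_int (min (\<eta> \<omega>) (int K))) \<partial>N)"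
    using drift by (auto simp: less_SUP_iff)
  define L where "L = int K + 1"
  define e where "e = map_pmf (\<lambda>z. min z L) e\<^sub>0"
  show thesis
  proof
    show "0 < L"
      by (simp add: L_def)
    show "set_pmf e \<subseteq> {..L}"
      by (auto simp: e_def)
    have "(\<integral>\<^sup>+x. ennreal (of_int (- x)) \<partial>e) = (\<integral>\<^sup>+\<omega>. ennreal (of_int (- \<eta> \<omega>)) \<partial>N)"
      unfolding e_def by (auto simp: nn_integral_e\<^sub>0 L_def min_def ennreal_neg intro!: nn_integral_cong)
    also note K
    also have "(\<integral>\<^sup>+\<omega>. ennreal (of_int (min (\<eta> \<omega>) (int K))) \<partial>N) \<le> (\<integral>\<^sup>+x. ennreal (of_int x) \<partial>e)"
      unfolding e_def by (auto simp: nn_integral_e\<^sub>0 L_def intro!: nn_integral_mono ennreal_leI)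
    finally show "(\<integral>\<^sup>+x. ennreal (of_int (- x)) \<partial>e) < (\<integral>\<^sup>+x. ennreal (of_int x) \<partial>e)" .
    fix j
    have "measure_pmf.prob e {x. x > j} \<le> measure_pmf.prob e\<^sub>0 {x. x > j}"
      unfolding e_def by (auto intro!: measure_pmf.finite_measure_mono)
    also have "\<dots> = measure N {\<omega> \<in> space N. \<eta> \<omega> > j}"
      unfolding e\<^sub>0 by (subst measure_distr[OF \<eta>]) (auto intro!: arg_cong[where f = "measure N"])
    finally show "measure_pmf.prob e {x. x > j} \<le> measure N {\<omega> \<in> space N. \<eta> \<omega> > j}" .
  qed
qed

lemma stays_pos_prob_lower_bound:
  fixes e :: "int pmf"
  assumes bounded: "set_pmf e \<subseteq> {..L}" and "0 < L"
    and drift: "(\<integral>\<^sup>+x. ennreal (of_int (- x)) \<partial>e) < (\<integral>\<^sup>+x. ennreal (of_int x) \<partial>e)"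
  obtains d where "0 < d" and "d \<le> 1"
    and "\<And>n. d \<le> measure_pmf.prob (replicate_pmf (Suc n) e) {xs. stays_pos 0 xs}"
proof -
  have "(\<integral>\<^sup>+x. ennreal (of_int x) \<partial>e) \<le> (\<integral>\<^sup>+x. ennreal (of_int L) \<partial>e)"
    using bounded by (intro nn_integral_mono_AE) (auto simp: AE_measure_pmf_iff subset_eq intro!: ennreal_leI)
  then obtain mean_pos where mean_pos: "(\<integral>\<^sup>+x. ennreal (of_int x) \<partial>e) = ennreal mean_pos" "0 \<le> mean_pos"
    by (cases "\<integral>\<^sup>+x. ennreal (of_int x) \<partial>e") (auto simp: measure_pmf.emeasure_space_1 top_unique)
  obtain mean_neg where mean_neg: "(\<integral>\<^sup>+x. ennreal (of_int (- x)) \<partial>e) = ennreal mean_neg" "0 \<le> mean_neg"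
    using drift by (cases "\<integral>\<^sup>+x. ennreal (of_int (- x)) \<partial>e") auto
  have "mean_neg < mean_pos"
    using drift mean_pos mean_neg by (simp add: ennreal_less_iff)
  define d where "d = min ((mean_pos - mean_neg) / of_int L) 1"
  show thesis
  proof
    show "0 < d" "d \<le> 1"
      using \<open>mean_neg < mean_pos\<close> \<open>0 < L\<close> by (simp_all add: d_def)
    fix n
    define D where "D = measure_pmf.prob (replicate_pmf (Suc n) e) {xs. stays_pos 0 xs}"
    have "(\<integral>\<^sup>+x. ennreal (of_int x) \<partial>e)
          \<le> ennreal (of_int L) * emeasure (replicate_pmf (Suc n) e) {xs. stays_pos 0 xs}
            + (\<integral>\<^sup>+x. ennreal (of_int (- x)) \<partial>e)"
      by (rule mean_pos_le_stays_pos_prob) (use bounded \<open>0 < L\<close> in auto)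
    then have "ennreal mean_pos \<le> ennreal (of_int L) * ennreal D + ennreal mean_neg"
      by (simp only: mean_pos(1) mean_neg(1) D_def measure_pmf.emeasure_eq_measure)
    also have "\<dots> = ennreal (of_int L * D + mean_neg)"
      using \<open>0 < L\<close> mean_neg by (simp add: D_def ennreal_mult ennreal_plus)
    finally have "mean_pos \<le> of_int L * D + mean_neg"
      using \<open>0 < L\<close> mean_neg by (subst (asm) ennreal_le_iff) (auto simp: D_def)
    then have "(mean_pos - mean_neg) / of_int L \<le> D"
      using \<open>0 < L\<close> by (simp add: divide_le_eq algebra_simps)
    then show "d \<le> D"
      by (simp add: d_def)
  qed
qed

theorem proposition4:
  fixes p :: "nat \<Rightarrow> nat pmf" and N :: "'a measure" and \<eta> :: "'a \<Rightarrow> int"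
  assumes "prob_space N"
    and "\<eta> \<in> N \<rightarrow>\<^sub>M count_space UNIV"
    and "(\<integral>\<^sup>+\<omega>. ennreal (real_of_int (- \<eta> \<omega>)) \<partial>N) < \<infinity>"
    and "(\<integral>\<^sup>+\<omega>. ennreal (real_of_int (- \<eta> \<omega>)) \<partial>N) < (\<integral>\<^sup>+\<omega>. ennreal (real_of_int (\<eta> \<omega>)) \<partial>N)"
    and "\<And>i j. measure N {\<omega> \<in> space N. \<eta> \<omega> > j}
                 \<le> measure_pmf.prob (p i) {k. int k - int i > j}"
  shows "\<exists>\<gamma>>0. \<exists>C::real. \<forall>i M. markov_law p i M \<longrightarrow>
           (\<integral>\<^sup>+\<omega>. exp_ennreal \<gamma> (local_time i \<omega>) \<partial>M) \<le> ennreal C"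
  \<comment> \<open>the finiteness hypothesis on \<open>\<bbbE>\<eta>\<^sup>-\<close> is implied by the drift hypothesis and not used\<close>
proof -
  obtain e :: "int pmf" and L where "0 < L" and bounded: "set_pmf e \<subseteq> {..L}"
    and drift: "(\<integral>\<^sup>+x. ennreal (of_int (- x)) \<partial>e) < (\<integral>\<^sup>+x. ennreal (of_int x) \<partial>e)"
    and tail_\<eta>: "\<And>j. measure_pmf.prob e {x. x > j} \<le> measure N {\<omega> \<in> space N. \<eta> \<omega> > j}"
    by (rule truncated_step_pmf[OF assms(1,2,4)]) (rule that)
  have tail: "measure_pmf.prob e {z. z > j} \<le> measure_pmf.prob (p x) {y. int y - int x > j}" for x j
    using tail_\<eta>[of j] assms(5)[of j x] by linarith
  obtain d where "0 < d" "d \<le> 1"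
    and stays_pos: "\<And>n. d \<le> measure_pmf.prob (replicate_pmf (Suc n) e) {xs. stays_pos 0 xs}"
    by (rule stays_pos_prob_lower_bound[OF bounded \<open>0 < L\<close> drift]) (rule that)
  define \<gamma> where "\<gamma> = ln (1 + d / 2)"
  have "0 < \<gamma>"
    using \<open>0 < d\<close> by (simp add: \<gamma>_def)
  have visits: "visit_mgf p i \<gamma> n i \<le> 2" for i n
    unfolding \<gamma>_def using \<open>0 < d\<close> \<open>d \<le> 1\<close> hit_prob_self_le[OF bounded tail stays_pos]
    by (rule visit_mgf_le_2)
  have "(\<integral>\<^sup>+\<omega>. exp_ennreal \<gamma> (local_time i \<omega>) \<partial>M) \<le> ennreal (exp \<gamma>) * 2" if "markov_law p i M" for i M
    using that \<open>0 < \<gamma>\<close> visits by (rule nn_integral_exp_local_time_le)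
  moreover have "ennreal (exp \<gamma>) * 2 = ennreal (exp \<gamma> * 2)"
    by (simp add: ennreal_mult)
  ultimately show ?thesis
    using \<open>0 < \<gamma>\<close> by metis
qed

end
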